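(* Let $\Sigma$ be an alphabet with $\sigma\ge2$ letters, let $k\ge4$ and $n=\sigma^{k-2}$. Let $S=s_1\cdots s_n$ be a cyclic de Bruijn sequence of order $k-2$ over $\Sigma$. Let $X$ be the string $S$ followed by its first $k$ characters $s_1\cdots s_k$. Indices are taken modulo $n$. For $i=1,\dots,n$: - let $y_i=s_i s_{i+1}\cdots s_{i+k-1}$ be the cyclic $k$-mer of $S$ starting at position $i$; - choose a letter $b_i\neq s_{i+k}$ and set $z_i=s_{i+1}\cdots s_{i+k-1}b_i$. Let $I=\{X\}\cup\{y_ib_i : 1\le i\le n\}$. Then: 1. The order-$k$ node-centric de Bruijn graph $G=(V,E)$ of $I$ has exactly the $2n$ nodes $y_1,\dots,y_n,z_1,\dots,z_n$ (all distinct), and its edges are exactly $(y_i,y_{i+1})$ and $(y_i,z_i)$ for $i=1,\dots,n$; that is, $G$ is a directed $n$-cycle with one out-degree-$0$ pendant node attached to each cycle node. 2. $F=E$ is a necklace cover of $G$ consisting of a single closed necklace with $N_O=0$ and $N_L=n$, whose necklace string has $2n$ letters and $2n$ parentheses, i.e. $4n$ symbols. 3. Every spectrum-preserving string set of $I$ without repetitions has weight at least $(k+1)n$, and weight $(k+1)n$ is attained. In particular, the necklace representation uses a fraction $4/(k+1)$ of the symbols of a minimum no-repetition SPSS.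
   Context: A cyclic de Bruijn sequence of order $m$ over $\Sigma$ is a string $S$ of length $\sigma^m$ such that every string of length $m$ over $\Sigma$ occurs exactly once as a cyclic substring of $S$ (i.e. as a substring of the infinite periodic extension starting at one of the positions $1,\dots,|S|$). $\mathrm{spec}_k(I)$ denotes the set of length-$k$ substrings of strings in $I$. The order-$k$ node-centric de Bruijn graph of $I$ is $G=(V,E)$ with $V=\mathrm{spec}_k(I)$ and $(u,v)\in E$ iff the last $k-1$ characters of $u$ equal the first $k-1$ characters of $v$; the label of $(u,v)$ is the last character of $v$. A necklace cover is an edge set $F\subseteq E$ with every node of in-degree at most $1$ in $(V,F)$. Its necklaces are the weakly connected components of $(V,F)$. A necklace is closed if it has no node of in-degree $0$ in $(V,F)$, open otherwise. $N_O$ is the number of open necklaces, and $N_L=(\#\text{nodes of out-degree }0\text{ in }(V,F))-N_O$. The necklace string of a closed necklace with cycle $v_1\to\cdots\to v_c$ is formed as follows: - take one character per cycle node, namely the label of its entering edge; - immediately after the character of each cycle node $v$, insert $\mathtt{(}\mathrm{enc}(w)\mathtt{)}$ for each child $w$ of $v$ not on the cycle; - here $\mathrm{enc}(w)$ is the label of the edge entering $w$ when $w$ has no children. A spectrum-preserving string set (SPSS) of $I$ without repetitions is a finite set $S'$ of strings, each of length at least $k$, such that $\mathrm{spec}_k(S')=\mathrm{spec}_k(I)$ and each $k$-mer of $\mathrm{spec}_k(I)$ occurs exactly once in total among all occurrences in the strings of $S'$. Its weight is $\sum_{z\in S'}|z|$. *)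

theory Defs
  imports Main
begin

text \<open>Positions are 0-based and taken modulo the length of the string.\<close>
definition cyc_sub :: "'a list \<Rightarrow> nat \<Rightarrow> nat \<Rightarrow> 'a list" where
  "cyc_sub S i m = map (\<lambda>j. S ! ((i + j) mod length S)) [0..<m]"

definition cyclic_de_bruijn :: "'a set \<Rightarrow> nat \<Rightarrow> 'a list \<Rightarrow> bool" where
  "cyclic_de_bruijn Sig m S \<longleftrightarrow>
     set S \<subseteq> Sig \<and> length S = card Sig ^ m \<and>
     (\<forall>w. length w = m \<and> set w \<subseteq> Sig \<longrightarrow>
        card {i. i < length S \<and> cyc_sub S i m = w} = 1)"

definition kmers :: "nat \<Rightarrow> 'a list \<Rightarrow> 'a list set" where
  "kmers k s = {take k (drop i s) | i. i + k \<le> length s}"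

definition spec :: "nat \<Rightarrow> 'a list set \<Rightarrow> 'a list set" where
  "spec k I = (\<Union>s\<in>I. kmers k s)"

definition occ :: "nat \<Rightarrow> 'a list \<Rightarrow> 'a list \<Rightarrow> nat" where
  "occ k w z = card {i. i + k \<le> length z \<and> take k (drop i z) = w}"

definition dbg_nodes :: "nat \<Rightarrow> 'a list set \<Rightarrow> 'a list set" where
  "dbg_nodes k I = spec k I"

definition dbg_edges :: "nat \<Rightarrow> 'a list set \<Rightarrow> ('a list \<times> 'a list) set" where
  "dbg_edges k I = {(u, v). u \<in> spec k I \<and> v \<in> spec k I \<and>
                           drop 1 u = take (k - 1) v}"

definition edge_label :: "'a list \<times> 'a list \<Rightarrow> 'a" where
  "edge_label e = last (snd e)"

definition necklace_cover :: "'v set \<Rightarrow> ('v \<times> 'v) set \<Rightarrow> ('v \<times> 'v) set \<Rightarrow> bool" where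
  "necklace_cover V E F \<longleftrightarrow> F \<subseteq> E \<and>
     (\<forall>v\<in>V. \<forall>u u'. (u, v) \<in> F \<longrightarrow> (u', v) \<in> F \<longrightarrow> u = u')"

definition necklaces :: "'v set \<Rightarrow> ('v \<times> 'v) set \<Rightarrow> 'v set set" where
  "necklaces V F = {{u \<in> V. (v, u) \<in> ((F \<inter> (V \<times> V)) \<union> (F \<inter> (V \<times> V))\<inverse>)\<^sup>*} | v. v \<in> V}"

definition closed_necklace :: "('v \<times> 'v) set \<Rightarrow> 'v set \<Rightarrow> bool" where
  "closed_necklace F C \<longleftrightarrow> (\<forall>v\<in>C. \<exists>u. (u, v) \<in> F)"

definition N_O :: "'v set \<Rightarrow> ('v \<times> 'v) set \<Rightarrow> nat" where
  "N_O V F = card {C \<in> necklaces V F. \<not> closed_necklace F C}"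

definition N_L :: "'v set \<Rightarrow> ('v \<times> 'v) set \<Rightarrow> nat" where
  "N_L V F = card {v \<in> V. \<not> (\<exists>w. (v, w) \<in> F)} - N_O V F"

datatype 'a nsym = Letter 'a | LParen | RParen

fun is_letter :: "'a nsym \<Rightarrow> bool" where
  "is_letter (Letter _) = True"
| "is_letter _ = False"

fun is_paren :: "'a nsym \<Rightarrow> bool" where
  "is_paren (Letter _) = False"
| "is_paren _ = True"

text \<open>The cycle is listed as cyc (any starting point),
  children of each cycle node off the cycle are listed in some order; only the case where
  those children have no children (enc(w) = label of the edge entering w) is defined,
  as in the paper.\<close>
definition necklace_string ::
  "'a list set \<Rightarrow> ('a list \<times> 'a list) set \<Rightarrow> 'a nsym list \<Rightarrow> bool" where
  "necklace_string C F str \<longleftrightarrow>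
     (\<exists>cyc chs. cyc \<noteq> [] \<and> distinct cyc \<and> set cyc \<subseteq> C \<and>
        (\<forall>j<length cyc. (cyc ! j, cyc ! ((j + 1) mod length cyc)) \<in> F) \<and>
        (\<forall>j<length cyc. distinct (chs j) \<and>
            set (chs j) = {w \<in> C. (cyc ! j, w) \<in> F \<and> w \<notin> set cyc} \<and>
            (\<forall>w\<in>set (chs j). \<not> (\<exists>x. (w, x) \<in> F))) \<and>
        str = concat (map (\<lambda>j. [Letter (edge_label (cyc ! ((j + length cyc - 1) mod length cyc), cyc ! j))]
                 @ concat (map (\<lambda>w. [LParen, Letter (edge_label (cyc ! j, w)), RParen]) (chs j)))
              [0..<length cyc]))"

definition spss_norep :: "nat \<Rightarrow> 'a list set \<Rightarrow> 'a list set \<Rightarrow> bool" where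
  "spss_norep k I S' \<longleftrightarrow> finite S' \<and> (\<forall>z\<in>S'. length z \<ge> k) \<and>
     spec k S' = spec k I \<and>
     (\<forall>w\<in>spec k I. (\<Sum>z\<in>S'. occ k w z) = 1)"

definition weight :: "'a list set \<Rightarrow> nat" where
  "weight S' = (\<Sum>z\<in>S'. length z)"

definition ykmer :: "'a list \<Rightarrow> nat \<Rightarrow> nat \<Rightarrow> 'a list" where
  "ykmer S k i = cyc_sub S i k"

definition zkmer :: "'a list \<Rightarrow> nat \<Rightarrow> (nat \<Rightarrow> 'a) \<Rightarrow> nat \<Rightarrow> 'a list" where
  "zkmer S k b i = cyc_sub S (i + 1) (k - 1) @ [b i]"

definition inst :: "'a list \<Rightarrow> nat \<Rightarrow> (nat \<Rightarrow> 'a) \<Rightarrow> 'a list set" where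
  "inst S k b = insert (S @ take k S) {ykmer S k i @ [b i] | i. i < length S}"

end

theory Submission
  imports Defs
begin

text \<open>
  Every word of length \<open>k - 2\<close> occurs exactly once cyclically in \<open>S\<close>, so a cyclic window of
  \<open>S\<close> of length at least \<open>k - 2\<close> is determined by its start position modulo \<open>n\<close>, and so is the
  letter following it. Hence the \<open>k\<close>-mers \<open>y\<^sub>i\<close> are distinct, \<open>z\<^sub>i\<close> (whose last letter
  \<open>b\<^sub>i\<close> is not the forced one) equals no \<open>y\<^sub>j\<close> and has no successor, and the only overlaps
  are \<open>y\<^sub>i \<rightarrow> y\<^bsub>i+1\<^esub>\<close> and \<open>y\<^sub>i \<rightarrow> z\<^sub>i\<close>: the graph is an \<open>n\<close>-cycle with a pendant leaf at
  every node, and its necklace string consists of \<open>n\<close> blocks of the shape \<open>c(d)\<close>.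

  In an SPSS without repetitions a string \<open>z\<close> contributes exactly \<open>|z| - k + 1\<close> of the
  \<open>k\<close>-mers, so the weight is \<open>|spec| + (k - 1)|S'|\<close>. A \<open>k\<close>-mer without successor can only
  occur as a suffix, so the \<open>n\<close> leaves \<open>z\<^sub>i\<close> force \<open>|S'| \<ge> n\<close> and weight
  \<open>\<ge> 2n + (k - 1)n\<close>; the strings \<open>y\<^sub>i b\<^sub>i\<close> attain this bound.
\<close>

section \<open>Cyclic substrings of a de Bruijn sequence\<close>

lemma length_cyc_sub [simp]: "length (cyc_sub S i m) = m"
  by (simp add: cyc_sub_def)

lemma nth_cyc_sub [simp]: "j < m \<Longrightarrow> cyc_sub S i m ! j = S ! ((i + j) mod length S)"
  by (simp add: cyc_sub_def)

lemma cyc_sub_mod: "cyc_sub S (i mod length S) m = cyc_sub S i m"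
  by (simp add: cyc_sub_def mod_add_left_eq)

lemma take_cyc_sub: "a \<le> m \<Longrightarrow> take a (cyc_sub S i m) = cyc_sub S i a"
  by (simp add: cyc_sub_def take_map)

lemma drop_Suc_cyc_sub: "drop (Suc 0) (cyc_sub S i m) = cyc_sub S (Suc i) (m - 1)"
  by (rule nth_equalityI) auto

lemma cyc_sub_Suc: "cyc_sub S i (Suc m) = cyc_sub S i m @ [S ! ((i + m) mod length S)]"
  by (simp add: cyc_sub_def)

lemma set_cyc_sub: "S \<noteq> [] \<Longrightarrow> set (cyc_sub S i m) \<subseteq> set S"
  by (auto simp: cyc_sub_def)

lemma cyclic_de_bruijn_cyc_sub_eq:
  assumes dB: "cyclic_de_bruijn Sig m S" and "S \<noteq> []" and "m \<le> a"
    and eq: "cyc_sub S i a = cyc_sub S j a"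
  shows "i mod length S = j mod length S"
proof -
  let ?w = "cyc_sub S i m"
  have "cyc_sub S j m = ?w"
    using eq take_cyc_sub[OF \<open>m \<le> a\<close>] by metis
  then have occ: "i mod length S \<in> {p. p < length S \<and> cyc_sub S p m = ?w}"
    "j mod length S \<in> {p. p < length S \<and> cyc_sub S p m = ?w}"
    using \<open>S \<noteq> []\<close> by (simp_all add: cyc_sub_mod)
  have "set ?w \<subseteq> Sig"
    using set_cyc_sub[OF \<open>S \<noteq> []\<close>] dB unfolding cyclic_de_bruijn_def by blast
  moreover have "\<forall>w. length w = m \<and> set w \<subseteq> Sig \<longrightarrow> card {p. p < length S \<and> cyc_sub S p m = w} = 1"
    using dB unfolding cyclic_de_bruijn_def by blast
  ultimately have "card {p. p < length S \<and> cyc_sub S p m = ?w} = 1"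
    by simp
  then obtain x where "{p. p < length S \<and> cyc_sub S p m = ?w} = {x}"
    by (auto simp: card_1_singleton_iff)
  then show ?thesis
    using occ by simp
qed

lemma cyclic_de_bruijn_cyc_sub_snoc:
  assumes "cyclic_de_bruijn Sig m S" and "S \<noteq> []" and "m \<le> a"
    and "cyc_sub S p (Suc a) = cyc_sub S q a @ [c]"
  shows "c = S ! ((q + a) mod length S)"
proof -
  have "cyc_sub S p a = cyc_sub S q a" and c: "c = S ! ((p + a) mod length S)"
    using assms(4) by (simp_all add: cyc_sub_Suc)
  then have "p mod length S = q mod length S"
    using cyclic_de_bruijn_cyc_sub_eq assms(1-3) by blast
  then show ?thesis
    using c by (metis mod_add_left_eq)
qed

section \<open>Spectrum-preserving string sets without repetitions\<close>

lemma kmers_eq_image: "kmers k s = (\<lambda>i. take k (drop i s)) ` {i. i + k \<le> length s}"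
  unfolding kmers_def by blast

lemma finite_kmers: "finite (kmers k s)"
  unfolding kmers_eq_image by (rule finite_imageI, rule finite_subset[of _ "{..length s}"]) auto

lemma finite_spec: "finite I \<Longrightarrow> finite (spec k I)"
  by (simp add: spec_def finite_kmers)

lemma kmers_length_Suc:
  assumes "length w = Suc k"
  shows "kmers k w = {take k w, drop 1 w}"
proof -
  have "{i. i + k \<le> length w} = {0, 1}"
    using assms by auto
  then show ?thesis
    using assms by (simp add: kmers_eq_image)
qed

lemma occ_pos:
  assumes "i + k \<le> length z" and "take k (drop i z) = w"
  shows "0 < occ k w z"
proof -
  have "finite {i. i + k \<le> length z \<and> take k (drop i z) = w}"
    by (rule finite_subset[of _ "{..length z}"]) auto
  then show ?thesis
    using assms unfolding occ_def by (auto simp: card_gt_0_iff)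
qed

lemma sum_occ_kmers:
  assumes "finite W" and "kmers k z \<subseteq> W" and "k \<le> length z"
  shows "(\<Sum>w\<in>W. occ k w z) = length z + 1 - k"
proof -
  let ?P = "{i. i + k \<le> length z}"
  have P: "?P = {..<length z + 1 - k}"
    using \<open>k \<le> length z\<close> by auto
  have "(\<lambda>i. take k (drop i z)) ` ?P \<subseteq> W"
    using assms(2) unfolding kmers_def by blast
  then have "(\<Sum>w\<in>W. \<Sum>i\<in>{i \<in> ?P. take k (drop i z) = w}. 1) = (\<Sum>i\<in>?P. 1::nat)"
    by (intro sum.group) (auto simp: P \<open>finite W\<close>)
  then have "(\<Sum>w\<in>W. occ k w z) = card ?P"
    unfolding occ_def by simp
  then show ?thesis
    by (simp add: P)
qed

lemma sum_positions_eq_sum_occ: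
  assumes "finite S'" and "\<forall>z\<in>S'. k \<le> length z"
  shows "(\<Sum>z\<in>S'. length z + 1 - k) = (\<Sum>w\<in>spec k S'. \<Sum>z\<in>S'. occ k w z)"
proof -
  have "finite (spec k S')"
    using \<open>finite S'\<close> by (rule finite_spec)
  then have "(\<Sum>z\<in>S'. length z + 1 - k) = (\<Sum>z\<in>S'. \<Sum>w\<in>spec k S'. occ k w z)"
    using assms(2) by (intro sum.cong refl sum_occ_kmers[symmetric]) (auto simp: spec_def)
  then show ?thesis
    by (simp add: sum.swap[of _ S'])
qed

lemma spss_norep_sum_positions:
  assumes "spss_norep k I S'"
  shows "(\<Sum>z\<in>S'. length z + 1 - k) = card (spec k I)"
  using assms sum_positions_eq_sum_occ[of S' k] by (simp add: spss_norep_def)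

lemma spss_norepI:
  assumes "finite S'" and "\<forall>z\<in>S'. k \<le> length z" and spec_eq: "spec k S' = spec k I"
    and count: "(\<Sum>z\<in>S'. length z + 1 - k) = card (spec k I)"
  shows "spss_norep k I S'"
  unfolding spss_norep_def
proof (intro conjI assms ballI)
  have pos: "1 \<le> (\<Sum>z\<in>S'. occ k w z)" if "w \<in> spec k I" for w
  proof -
    have "w \<in> spec k S'"
      using that spec_eq by simp
    then obtain z i where z: "z \<in> S'" and i: "i + k \<le> length z" "take k (drop i z) = w"
      unfolding spec_def kmers_def by blast
    have "1 \<le> occ k w z"
      using occ_pos[OF i] by simp
    also have "\<dots> \<le> (\<Sum>z\<in>S'. occ k w z)"
      using \<open>finite S'\<close> z by (intro member_le_sum) auto
    finally show ?thesis .
  qed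
  have sum_eq: "(\<Sum>w\<in>spec k I. 1) = (\<Sum>w\<in>spec k I. \<Sum>z\<in>S'. occ k w z)"
    using count sum_positions_eq_sum_occ[OF assms(1,2)] by (simp add: spec_eq)
  have "finite (spec k I)"
    using finite_spec[OF \<open>finite S'\<close>, of k] spec_eq by simp
  then show "(\<Sum>z\<in>S'. occ k w z) = 1" if "w \<in> spec k I" for w
    using sum_mono_inv[OF sum_eq pos that] by simp
qed

lemma spss_dead_end_suffix:
  assumes "spss_norep k I S'" and w: "w \<in> spec k I"
    and dead: "\<forall>w'\<in>spec k I. drop 1 w \<noteq> take (k - 1) w'"
  shows "\<exists>z\<in>S'. w = drop (length z - k) z"
proof -
  have spec_eq: "spec k S' = spec k I"
    using assms(1) by (simp add: spss_norep_def)
  have "w \<in> spec k S'"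
    using w spec_eq by simp
  then obtain z i where z: "z \<in> S'" and i: "i + k \<le> length z" and wi: "w = take k (drop i z)"
    unfolding spec_def kmers_def by blast
  have "i + k = length z"
  proof (rule ccontr)
    assume "i + k \<noteq> length z"
    then have "take k (drop (Suc i) z) \<in> spec k S'"
      using i z unfolding spec_def kmers_def by fastforce
    moreover have "drop 1 w = take (k - 1) (take k (drop (Suc i) z))"
      unfolding wi by (simp add: drop_take min_def)
    ultimately show False
      using dead spec_eq by blast
  qed
  then have "w = drop (length z - k) z"
    using wi by (simp flip: \<open>i + k = length z\<close>)
  then show ?thesis
    using z by blast
qed

lemma spss_norep_weight_ge_dead_ends:
  assumes "spss_norep k I S'" and "1 \<le> k" and "D \<subseteq> spec k I"
    and dead: "\<forall>w\<in>D. \<forall>w'\<in>spec k I. drop 1 w \<noteq> take (k - 1) w'"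
  shows "card (spec k I) + (k - 1) * card D \<le> weight S'"
proof -
  have fin: "finite S'" and len: "\<forall>z\<in>S'. k \<le> length z"
    using assms(1) by (simp_all add: spss_norep_def)
  have "D \<subseteq> (\<lambda>z. drop (length z - k) z) ` S'"
    using spss_dead_end_suffix[OF assms(1)] assms(3) dead by blast
  then have "card D \<le> card S'"
    using fin by (meson card_image_le card_mono finite_imageI le_trans)
  have "weight S' = (\<Sum>z\<in>S'. (length z + 1 - k) + (k - 1))"
    unfolding weight_def using len \<open>1 \<le> k\<close> by (intro sum.cong) auto
  also have "\<dots> = card (spec k I) + (k - 1) * card S'"
    using spss_norep_sum_positions[OF assms(1)] by (simp add: sum.distrib)
  finally show ?thesis
    using \<open>card D \<le> card S'\<close> by simp
qed

section \<open>A cycle with a pendant leaf at every node\<close>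

lemma Suc_mod_eq_iff: "i < n \<Longrightarrow> j < n \<Longrightarrow> Suc i mod n = Suc j mod n \<longleftrightarrow> i = j"
  by (auto simp: mod_Suc split: if_splits)

lemma length_concat_map_upt:
  "(\<And>j. j < n \<Longrightarrow> length (f j) = c) \<Longrightarrow> length (concat (map f [0..<n])) = c * n"
  by (induction n) auto

locale pendant_cycle =
  fixes n :: nat and Y Z :: "nat \<Rightarrow> 'a list"
  assumes n_pos: "0 < n"
    and inj_Y: "inj_on Y {..<n}" and inj_Z: "inj_on Z {..<n}"
    and Y_neq_Z: "i < n \<Longrightarrow> j < n \<Longrightarrow> Y i \<noteq> Z j"
begin

definition nodes :: "'a list set" where
  "nodes = Y ` {..<n} \<union> Z ` {..<n}"

definition edges :: "('a list \<times> 'a list) set" where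
  "edges = {(Y i, Y ((i + 1) mod n)) | i. i < n} \<union> {(Y i, Z i) | i. i < n}"

lemma Y_eq_iff: "i < n \<Longrightarrow> j < n \<Longrightarrow> Y i = Y j \<longleftrightarrow> i = j"
  using inj_Y by (auto dest: inj_onD)

lemma Z_eq_iff: "i < n \<Longrightarrow> j < n \<Longrightarrow> Z i = Z j \<longleftrightarrow> i = j"
  using inj_Z by (auto dest: inj_onD)

lemma card_nodes: "card nodes = 2 * n"
proof -
  have "Y ` {..<n} \<inter> Z ` {..<n} = {}"
    using Y_neq_Z by auto
  then have "card nodes = card (Y ` {..<n}) + card (Z ` {..<n})"
    unfolding nodes_def by (simp add: card_Un_disjoint)
  then show ?thesis
    by (simp add: card_image inj_Y inj_Z)
qed

lemma edge_Y_succ: "i < n \<Longrightarrow> (Y i, Y (Suc i mod n)) \<in> edges"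
  unfolding edges_def by auto

lemma edge_Y_Z: "i < n \<Longrightarrow> (Y i, Z i) \<in> edges"
  unfolding edges_def by auto

lemma edges_subset: "edges \<subseteq> nodes \<times> nodes"
  unfolding edges_def nodes_def using n_pos by auto

lemma edge_source: "(u, w) \<in> edges \<Longrightarrow> \<exists>i<n. u = Y i"
  unfolding edges_def by blast

lemma no_edge_from_Z: "j < n \<Longrightarrow> (Z j, w) \<notin> edges"
  using edge_source Y_neq_Z by metis

lemma edge_from_Y: "(Y i, w) \<in> edges \<Longrightarrow> i < n \<Longrightarrow> w = Y (Suc i mod n) \<or> w = Z i"
  unfolding edges_def using Y_eq_iff by auto

lemma edge_into_Y: "(u, Y j) \<in> edges \<Longrightarrow> j < n \<Longrightarrow> \<exists>i<n. u = Y i \<and> j = Suc i mod n"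
  unfolding edges_def using Y_eq_iff Y_neq_Z n_pos by auto

lemma edge_into_Z: "(u, Z j) \<in> edges \<Longrightarrow> j < n \<Longrightarrow> u = Y j"
  unfolding edges_def using Z_eq_iff by auto (metis Y_neq_Z mod_less_divisor n_pos)

lemma necklace_cover_edges: "necklace_cover nodes edges edges"
  unfolding necklace_cover_def
proof (intro conjI ballI allI impI subset_refl)
  fix v u u' assume "v \<in> nodes" and in_edges: "(u, v) \<in> edges" "(u', v) \<in> edges"
  then consider j where "j < n" "v = Y j" | j where "j < n" "v = Z j"
    unfolding nodes_def by blast
  then show "u = u'"
  proof cases
    case 1
    then obtain i i' where "i < n" "i' < n" "u = Y i" "u' = Y i'" "Suc i mod n = Suc i' mod n"
      using edge_into_Y in_edges by metis
    then show ?thesis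
      by (simp add: Suc_mod_eq_iff)
  next
    case 2
    then show ?thesis
      using edge_into_Z in_edges by blast
  qed
qed

lemma reachable_from_Y0:
  assumes "u \<in> nodes"
  shows "(Y 0, u) \<in> edges\<^sup>*"
proof -
  have Y: "(Y 0, Y i) \<in> edges\<^sup>*" if "i < n" for i
    using that
  proof (induction i)
    case (Suc i)
    then have "(Y i, Y (Suc i)) \<in> edges"
      using edge_Y_succ[of i] by simp
    with Suc show ?case
      by (meson Suc_lessD rtrancl.rtrancl_into_rtrancl)
  qed simp
  show ?thesis
    using assms Y edge_Y_Z unfolding nodes_def by (auto intro: rtrancl_into_rtrancl)
qed

lemma necklaces_eq: "necklaces nodes edges = {nodes}"
proof -
  let ?R = "edges \<union> edges\<inverse>"
  have "(v, u) \<in> ?R\<^sup>*" if "u \<in> nodes" "v \<in> nodes" for u v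
  proof -
    have "(v, Y 0) \<in> ?R\<^sup>*"
      using rtrancl_mono[of "edges\<inverse>" ?R] reachable_from_Y0[OF that(2)]
      by (auto simp: rtrancl_converse)
    moreover have "(Y 0, u) \<in> ?R\<^sup>*"
      using rtrancl_mono[of edges ?R] reachable_from_Y0[OF that(1)] by auto
    ultimately show ?thesis
      by simp
  qed
  moreover have "edges \<inter> (nodes \<times> nodes) = edges"
    using edges_subset by blast
  moreover have "nodes \<noteq> {}"
    using n_pos unfolding nodes_def by blast
  ultimately show ?thesis
    unfolding necklaces_def by auto
qed

lemma closed_necklace_nodes: "closed_necklace edges nodes"
  unfolding closed_necklace_def
proof
  fix v assume "v \<in> nodes"
  then consider j where "j < n" "v = Y j" | j where "j < n" "v = Z j"
    unfolding nodes_def by blast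
  then show "\<exists>u. (u, v) \<in> edges"
  proof cases
    case 1
    \<comment> \<open>\<open>j + n - 1\<close> rather than \<open>j - 1\<close>, which truncates at \<open>j = 0\<close>\<close>
    then have "Suc ((j + n - 1) mod n) mod n = j"
      using n_pos by (simp add: mod_Suc_eq)
    with 1 show ?thesis
      using edge_Y_succ[of "(j + n - 1) mod n"] n_pos by (metis mod_less_divisor)
  next
    case 2
    then show ?thesis
      using edge_Y_Z by blast
  qed
qed

lemma N_O_eq: "N_O nodes edges = 0"
  unfolding N_O_def necklaces_eq using closed_necklace_nodes by simp

lemma N_L_eq: "N_L nodes edges = n"
proof -
  have "{v \<in> nodes. \<not> (\<exists>w. (v, w) \<in> edges)} = Z ` {..<n}"
    unfolding nodes_def using edge_Y_Z no_edge_from_Z by blast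
  then show ?thesis
    unfolding N_L_def N_O_eq by (simp add: card_image inj_Z)
qed

lemma children_of_Y:
  assumes "i < n"
  shows "{w \<in> nodes. (Y i, w) \<in> edges \<and> w \<notin> Y ` {..<n}} = {Z i}"
proof -
  have "Z i \<notin> Y ` {..<n}"
    using Y_neq_Z assms by fastforce
  show ?thesis
  proof (intro equalityI subsetI)
    fix w assume "w \<in> {w \<in> nodes. (Y i, w) \<in> edges \<and> w \<notin> Y ` {..<n}}"
    then have "(Y i, w) \<in> edges" and "w \<notin> Y ` {..<n}"
      by auto
    moreover have "Y (Suc i mod n) \<in> Y ` {..<n}"
      using n_pos by simp
    ultimately show "w \<in> {Z i}"
      using edge_from_Y[OF _ assms] by fastforce
  next
    fix w assume "w \<in> {Z i}"
    then show "w \<in> {w \<in> nodes. (Y i, w) \<in> edges \<and> w \<notin> Y ` {..<n}}"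
      using edge_Y_Z[OF assms] \<open>Z i \<notin> Y ` {..<n}\<close> assms unfolding nodes_def by auto
  qed
qed

lemma cycle_nodes:
  assumes "cyc \<noteq> []"
    and cycle: "\<forall>j<length cyc. (cyc ! j, cyc ! ((j + 1) mod length cyc)) \<in> edges"
  shows "set cyc = Y ` {..<n}"
proof -
  have on_Y: "c \<in> Y ` {..<n}" if c: "c \<in> set cyc" for c
  proof -
    obtain j where "j < length cyc" "cyc ! j = c"
      using c by (auto simp: in_set_conv_nth)
    then obtain i where "i < n" "c = Y i"
      using cycle edge_source by blast
    then show ?thesis
      by blast
  qed
  have succ: "Y (Suc i mod n) \<in> set cyc" if "i < n" and Y_i: "Y i \<in> set cyc" for i
  proof -
    obtain j where j: "j < length cyc" "cyc ! j = Y i"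
      using Y_i by (auto simp: in_set_conv_nth)
    let ?c = "cyc ! ((j + 1) mod length cyc)"
    have "?c \<in> set cyc"
      using \<open>cyc \<noteq> []\<close> by simp
    moreover have "?c \<noteq> Z i"
      using on_Y[OF \<open>?c \<in> set cyc\<close>] Y_neq_Z \<open>i < n\<close> by fastforce
    moreover have "(Y i, ?c) \<in> edges"
      using cycle j by auto
    ultimately show ?thesis
      using edge_from_Y[OF _ \<open>i < n\<close>] by metis
  qed
  obtain i0 where i0: "i0 < n" "Y i0 \<in> set cyc"
    using on_Y[OF hd_in_set] hd_in_set \<open>cyc \<noteq> []\<close> by force
  have all: "Y ((i0 + t) mod n) \<in> set cyc" for t
  proof (induction t)
    case (Suc t)
    then show ?case
      using succ[of "(i0 + t) mod n"] n_pos by (simp add: mod_Suc_eq)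
  qed (use i0 in simp)
  have "Y i \<in> set cyc" if "i < n" for i
    using all[of "i + n - i0"] that i0 by simp
  then show ?thesis
    using on_Y by blast
qed

lemma necklace_string_exists: "\<exists>str. necklace_string nodes edges str"
proof -
  let ?cyc = "map Y [0..<n]" and ?chs = "\<lambda>j. [Z j]"
  have cyc: "?cyc \<noteq> []" "distinct ?cyc" "set ?cyc \<subseteq> nodes"
    using n_pos inj_Y by (auto simp: distinct_map atLeast0LessThan nodes_def)
  have cycle: "\<forall>j<length ?cyc. (?cyc ! j, ?cyc ! ((j + 1) mod length ?cyc)) \<in> edges"
    using edge_Y_succ n_pos by simp
  have children: "\<forall>j<length ?cyc. distinct (?chs j) \<and>
      set (?chs j) = {w \<in> nodes. (?cyc ! j, w) \<in> edges \<and> w \<notin> set ?cyc} \<and>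
      (\<forall>w\<in>set (?chs j). \<not> (\<exists>x. (w, x) \<in> edges))"
    using children_of_Y no_edge_from_Z by (simp add: atLeast0LessThan)
  show ?thesis
    unfolding necklace_string_def
    by (intro exI[of _ ?cyc] exI[of _ ?chs] exI conjI cyc cycle children) (rule refl)
qed

lemma children_list_singleton:
  assumes "set cyc = Y ` {..<n}" and "j < length cyc" and "distinct cs"
    and "set cs = {w \<in> nodes. (cyc ! j, w) \<in> edges \<and> w \<notin> set cyc}"
  shows "\<exists>w. cs = [w]"
proof -
  obtain i where "i < n" "cyc ! j = Y i"
    using assms(1) nth_mem[OF assms(2)] by auto
  then have "set cs = {Z i}"
    using assms(1,4) children_of_Y by simp
  then have "length cs = 1"
    using distinct_card[OF \<open>distinct cs\<close>] by simp
  then show ?thesis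
    by (simp add: length_Suc_conv)
qed

lemma necklace_string_length:
  assumes "necklace_string nodes edges str"
  shows "length (filter is_letter str) = 2 * n \<and> length (filter is_paren str) = 2 * n
    \<and> length str = 4 * n"
proof -
  define block :: "'a list list \<Rightarrow> (nat \<Rightarrow> 'a list list) \<Rightarrow> nat \<Rightarrow> 'a nsym list"
    where "block = (\<lambda>cyc chs j.
      [Letter (edge_label (cyc ! ((j + length cyc - 1) mod length cyc), cyc ! j))]
      @ concat (map (\<lambda>w. [LParen, Letter (edge_label (cyc ! j, w)), RParen]) (chs j)))"
  obtain cyc chs where "cyc \<noteq> []" and "distinct cyc"
    and cycle: "\<forall>j<length cyc. (cyc ! j, cyc ! ((j + 1) mod length cyc)) \<in> edges"
    and chs: "\<forall>j<length cyc. distinct (chs j) \<and>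
      set (chs j) = {w \<in> nodes. (cyc ! j, w) \<in> edges \<and> w \<notin> set cyc}"
    and str: "str = concat (map (block cyc chs) [0..<length cyc])"
    using assms unfolding necklace_string_def block_def by blast
  have set_cyc: "set cyc = Y ` {..<n}"
    using cycle_nodes[OF \<open>cyc \<noteq> []\<close> cycle] .
  then have "length cyc = n"
    using distinct_card[OF \<open>distinct cyc\<close>] by (simp add: card_image inj_Y)
  have singleton: "\<exists>w. chs j = [w]" if "j < length cyc" for j
    using children_list_singleton[OF set_cyc that] chs that by blast
  have "length (filter is_letter (block cyc chs j)) = 2"
    "length (filter is_paren (block cyc chs j)) = 2" "length (block cyc chs j) = 4" if "j < n" for j
  proof -
    obtain w where "chs j = [w]"
      using singleton[of j] \<open>j < n\<close> \<open>length cyc = n\<close> by auto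
    then show "length (filter is_letter (block cyc chs j)) = 2"
      "length (filter is_paren (block cyc chs j)) = 2" "length (block cyc chs j) = 4"
      by (simp_all add: block_def)
  qed
  then show ?thesis
    unfolding str \<open>length cyc = n\<close> filter_concat map_map comp_def
    by (intro conjI length_concat_map_upt) simp_all
qed

end

section \<open>The instance built from a de Bruijn sequence\<close>

lemma le_two_power_diff_2: "4 \<le> k \<Longrightarrow> k \<le> (2::nat) ^ (k - 2)"
proof (induction k rule: nat_induct_at_least)
  case (Suc k)
  then have "Suc k - 2 = Suc (k - 2)"
    by simp
  then have "(2::nat) ^ (Suc k - 2) = 2 * 2 ^ (k - 2)"
    by simp
  with Suc show ?case
    by linarith
qed simp

locale de_bruijn_instance =
  fixes Sig :: "'a set" and k :: nat and S :: "'a list" and b :: "nat \<Rightarrow> 'a"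
  assumes card_Sig: "card Sig \<ge> 2" and k_ge: "k \<ge> 4"
    and de_bruijn: "cyclic_de_bruijn Sig (k - 2) S"
    and b_neq: "\<forall>i < length S. b i \<noteq> S ! ((i + k) mod length S)"
begin

lemma length_S: "length S = card Sig ^ (k - 2)"
  using de_bruijn by (simp add: cyclic_de_bruijn_def)

lemma k_le_length: "k \<le> length S"
proof -
  have "(2::nat) ^ (k - 2) \<le> card Sig ^ (k - 2)"
    using card_Sig by (simp add: power_mono)
  then show ?thesis
    using le_two_power_diff_2[OF k_ge] length_S by linarith
qed

lemma S_ne: "S \<noteq> []"
  using k_le_length k_ge by auto

lemma cyc_sub_eq_iff:
  assumes "k - 2 \<le> a"
  shows "cyc_sub S i a = cyc_sub S j a \<longleftrightarrow> i mod length S = j mod length S"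
proof
  show "cyc_sub S i a = cyc_sub S j a \<Longrightarrow> i mod length S = j mod length S"
    by (rule cyclic_de_bruijn_cyc_sub_eq[OF de_bruijn S_ne assms])
  show "i mod length S = j mod length S \<Longrightarrow> cyc_sub S i a = cyc_sub S j a"
    by (metis cyc_sub_mod)
qed

lemma cyc_sub_snoc_eq:
  "k - 2 \<le> a \<Longrightarrow> cyc_sub S p (Suc a) = cyc_sub S q a @ [c] \<Longrightarrow> c = S ! ((q + a) mod length S)"
  using cyclic_de_bruijn_cyc_sub_snoc[OF de_bruijn S_ne] .

lemma length_ykmer: "length (ykmer S k i) = k"
  by (simp add: ykmer_def)

lemma take_ykmer: "take (k - 1) (ykmer S k i) = cyc_sub S i (k - 1)"
  by (simp add: ykmer_def take_cyc_sub)

lemma drop_ykmer: "drop 1 (ykmer S k i) = cyc_sub S (Suc i) (k - 1)"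
  by (simp add: ykmer_def drop_Suc_cyc_sub)

lemma take_zkmer: "take (k - 1) (zkmer S k b i) = cyc_sub S (Suc i) (k - 1)"
  by (simp add: zkmer_def)

lemma drop_zkmer: "drop 1 (zkmer S k b i) = cyc_sub S (Suc (Suc i)) (k - 2) @ [b i]"
  using k_ge by (simp add: zkmer_def drop_Suc_cyc_sub numeral_2_eq_2)

lemma inj_ykmer: "inj_on (ykmer S k) {..<length S}"
  by (rule inj_onI) (simp add: ykmer_def cyc_sub_eq_iff)

lemma inj_zkmer: "inj_on (zkmer S k b) {..<length S}"
proof (rule inj_onI)
  fix i j assume "i \<in> {..<length S}" "j \<in> {..<length S}" "zkmer S k b i = zkmer S k b j"
  then have "i < length S" "j < length S" "Suc i mod length S = Suc j mod length S"
    by (auto simp: zkmer_def cyc_sub_eq_iff)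
  then show "i = j"
    by (simp add: Suc_mod_eq_iff)
qed

lemma ykmer_neq_zkmer:
  assumes "i < length S"
  shows "ykmer S k j \<noteq> zkmer S k b i"
proof
  assume "ykmer S k j = zkmer S k b i"
  then have "cyc_sub S j (Suc (k - 1)) = cyc_sub S (Suc i) (k - 1) @ [b i]"
    using k_ge by (simp add: ykmer_def zkmer_def)
  then have "b i = S ! ((Suc i + (k - 1)) mod length S)"
    by (rule cyc_sub_snoc_eq[rotated]) simp
  then show False
    using b_neq assms k_ge by simp
qed

lemma zkmer_dead_end:
  assumes "i < length S"
  shows "drop 1 (zkmer S k b i) \<noteq> cyc_sub S p (k - 1)"
proof
  assume dead: "drop 1 (zkmer S k b i) = cyc_sub S p (k - 1)"
  have "Suc (k - 2) = k - 1"
    using k_ge by simp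
  with dead have "cyc_sub S p (Suc (k - 2)) = cyc_sub S (Suc (Suc i)) (k - 2) @ [b i]"
    by (metis drop_zkmer)
  then have "b i = S ! ((Suc (Suc i) + (k - 2)) mod length S)"
    by (rule cyc_sub_snoc_eq[rotated]) simp
  moreover have "Suc (Suc i) + (k - 2) = i + k"
    using k_ge by simp
  ultimately have "b i = S ! ((i + k) mod length S)"
    by (simp only:)
  with b_neq assms show False
    by simp
qed

sublocale pendant_cycle "length S" "ykmer S k" "zkmer S k b"
  using k_le_length k_ge inj_ykmer inj_zkmer ykmer_neq_zkmer by unfold_locales auto

lemma take_circular_extension:
  assumes "i \<le> length S"
  shows "take k (drop i (S @ take k S)) = ykmer S k i"
proof (rule nth_equalityI)
  show "length (take k (drop i (S @ take k S))) = length (ykmer S k i)"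
    using k_le_length assms by (simp add: ykmer_def)
next
  fix j assume "j < length (take k (drop i (S @ take k S)))"
  then have "j < k"
    by (metis length_take min_less_iff_conj)
  then show "take k (drop i (S @ take k S)) ! j = ykmer S k i ! j"
    using assms k_le_length
    by (auto simp: ykmer_def nth_append not_less le_mod_geq add.commute)
qed

lemma kmers_circular_extension: "kmers k (S @ take k S) = ykmer S k ` {..<length S}"
proof -
  have "{i. i + k \<le> length (S @ take k S)} = {..length S}"
    using k_le_length by auto
  moreover have "ykmer S k (length S) = ykmer S k 0"
    using cyc_sub_mod[of S "length S" k] by (simp add: ykmer_def)
  ultimately show ?thesis
    unfolding kmers_eq_image using take_circular_extension n_pos
    by (auto simp: image_iff le_less)
qed

lemma kmers_ykmer_snoc: "kmers k (ykmer S k i @ [b i]) = {ykmer S k i, zkmer S k b i}"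
  using k_ge by (simp add: kmers_length_Suc ykmer_def zkmer_def drop_Suc_cyc_sub)

lemma spec_inst: "spec k (inst S k b) = nodes"
  unfolding spec_def inst_def nodes_def
  by (auto simp: kmers_circular_extension kmers_ykmer_snoc)

lemma ykmer_overlap_succ: "drop 1 (ykmer S k i) = take (k - 1) (ykmer S k ((i + 1) mod length S))"
  unfolding drop_ykmer take_ykmer cyc_sub_mod by simp

lemma ykmer_overlap_zkmer: "drop 1 (ykmer S k i) = take (k - 1) (zkmer S k b i)"
  unfolding drop_ykmer take_zkmer ..

lemma prefix_of_node: "w \<in> nodes \<Longrightarrow> \<exists>p. take (k - 1) w = cyc_sub S p (k - 1)"
  unfolding nodes_def using take_ykmer take_zkmer by blast

lemma zkmer_no_successor:
  assumes "i < length S" and "w' \<in> nodes"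
  shows "drop 1 (zkmer S k b i) \<noteq> take (k - 1) w'"
proof -
  obtain p where "take (k - 1) w' = cyc_sub S p (k - 1)"
    using prefix_of_node[OF assms(2)] by blast
  then show ?thesis
    using zkmer_dead_end[OF assms(1)] by simp
qed

lemma overlap_if_edge: "(u, v) \<in> edges \<Longrightarrow> drop 1 u = take (k - 1) v"
  unfolding edges_def using ykmer_overlap_succ ykmer_overlap_zkmer by auto

lemma edge_if_overlap:
  assumes "u \<in> nodes" and "v \<in> nodes" and overlap: "drop 1 u = take (k - 1) v"
  shows "(u, v) \<in> edges"
proof -
  have "u \<notin> zkmer S k b ` {..<length S}"
    using zkmer_no_successor assms by blast
  then obtain i where i: "i < length S" "u = ykmer S k i"
    using \<open>u \<in> nodes\<close> unfolding nodes_def by blast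
  with overlap have overlap_i: "cyc_sub S (Suc i) (k - 1) = take (k - 1) v"
    using drop_ykmer by simp
  from \<open>v \<in> nodes\<close> consider j where "j < length S" "v = ykmer S k j"
    | j where "j < length S" "v = zkmer S k b j"
    unfolding nodes_def by blast
  then show ?thesis
  proof cases
    case 1
    have "cyc_sub S (Suc i) (k - 1) = cyc_sub S j (k - 1)"
      using overlap_i unfolding 1(2) take_ykmer .
    then have "Suc i mod length S = j"
      using 1 by (simp add: cyc_sub_eq_iff)
    then show ?thesis
      using 1 i edge_Y_succ by blast
  next
    case 2
    have "cyc_sub S (Suc i) (k - 1) = cyc_sub S (Suc j) (k - 1)"
      using overlap_i unfolding 2(2) take_zkmer .
    then have "i = j"
      using 2 i by (simp add: cyc_sub_eq_iff Suc_mod_eq_iff)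
    then show ?thesis
      using 2 i edge_Y_Z by blast
  qed
qed

lemma dbg_edges_inst: "dbg_edges k (inst S k b) = edges"
  unfolding dbg_edges_def spec_inst
  using edges_subset overlap_if_edge edge_if_overlap by blast

lemma spss_norep_inst_weight_ge:
  assumes "spss_norep k (inst S k b) S'"
  shows "(k + 1) * length S \<le> weight S'"
proof -
  let ?D = "zkmer S k b ` {..<length S}"
  have "?D \<subseteq> spec k (inst S k b)"
    unfolding spec_inst nodes_def by blast
  moreover have "\<forall>w\<in>?D. \<forall>w'\<in>spec k (inst S k b). drop 1 w \<noteq> take (k - 1) w'"
    unfolding spec_inst using zkmer_no_successor by blast
  ultimately have "card (spec k (inst S k b)) + (k - 1) * card ?D \<le> weight S'"
    using spss_norep_weight_ge_dead_ends[OF assms] k_ge by simp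
  moreover have "card ?D = length S"
    by (simp add: card_image inj_zkmer)
  moreover have "(k + 1) * length S = 2 * length S + (k - 1) * length S"
    using k_ge by (simp add: algebra_simps flip: Suc_diff_le)
  ultimately show ?thesis
    by (simp add: spec_inst card_nodes)
qed

lemma spss_norep_inst_optimal: "\<exists>S'. spss_norep k (inst S k b) S' \<and> weight S' = (k + 1) * length S"
proof -
  define S' where "S' = (\<lambda>i. ykmer S k i @ [b i]) ` {..<length S}"
  have inj: "inj_on (\<lambda>i. ykmer S k i @ [b i]) {..<length S}"
    using inj_ykmer by (auto intro!: inj_onI dest: inj_onD)
  then have card_S': "card S' = length S"
    unfolding S'_def by (simp add: card_image)
  have length_S': "length z = k + 1" if "z \<in> S'" for z
    using that unfolding S'_def by (auto simp: length_ykmer)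
  have "finite S'"
    unfolding S'_def by simp
  moreover have "\<forall>z\<in>S'. k \<le> length z"
    using length_S' by simp
  moreover have "spec k S' = (\<Union>i<length S. {ykmer S k i, zkmer S k b i})"
    unfolding spec_def S'_def image_image kmers_ykmer_snoc ..
  then have "spec k S' = spec k (inst S k b)"
    unfolding spec_inst nodes_def by blast
  moreover have "(\<Sum>z\<in>S'. length z + 1 - k) = card (spec k (inst S k b))"
  proof -
    have "(\<Sum>z\<in>S'. length z + 1 - k) = (\<Sum>z\<in>S'. 2)"
      using length_S' by (intro sum.cong) auto
    then show ?thesis
      by (simp add: card_S' spec_inst card_nodes)
  qed
  ultimately have "spss_norep k (inst S k b) S'"
    by (rule spss_norepI)
  moreover have "weight S' = (k + 1) * length S"
  proof -
    have "weight S' = (\<Sum>z\<in>S'. k + 1)"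
      unfolding weight_def using length_S' by (intro sum.cong) auto
    then show ?thesis
      by (simp add: card_S')
  qed
  ultimately show ?thesis
    by blast
qed

end

theorem mainTheorem6:
  fixes Sig :: "'a set" and k :: nat and S :: "'a list" and b :: "nat \<Rightarrow> 'a"
  assumes "finite Sig" and "card Sig \<ge> 2" and "k \<ge> 4"
    and "cyclic_de_bruijn Sig (k - 2) S"
    and "\<forall>i < length S. b i \<in> Sig \<and> b i \<noteq> S ! ((i + k) mod length S)"
  shows
   "length S = card Sig ^ (k - 2) \<and>
    dbg_nodes k (inst S k b) =
      {ykmer S k i | i. i < length S} \<union> {zkmer S k b i | i. i < length S} \<and>
    card (dbg_nodes k (inst S k b)) = 2 * length S \<and>
    dbg_edges k (inst S k b) =
      {(ykmer S k i, ykmer S k ((i + 1) mod length S)) | i. i < length S} \<union>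
      {(ykmer S k i, zkmer S k b i) | i. i < length S} \<and>
    necklace_cover (dbg_nodes k (inst S k b)) (dbg_edges k (inst S k b)) (dbg_edges k (inst S k b)) \<and>
    (\<exists>C. necklaces (dbg_nodes k (inst S k b)) (dbg_edges k (inst S k b)) = {C} \<and>
         closed_necklace (dbg_edges k (inst S k b)) C \<and>
         (\<exists>str. necklace_string C (dbg_edges k (inst S k b)) str) \<and>
         (\<forall>str. necklace_string C (dbg_edges k (inst S k b)) str \<longrightarrow>
            length (filter is_letter str) = 2 * length S \<and>
            length (filter is_paren str) = 2 * length S \<and>
            length str = 4 * length S)) \<and>
    N_O (dbg_nodes k (inst S k b)) (dbg_edges k (inst S k b)) = 0 \<and>
    N_L (dbg_nodes k (inst S k b)) (dbg_edges k (inst S k b)) = length S \<and>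
    (\<forall>S'. spss_norep k (inst S k b) S' \<longrightarrow> weight S' \<ge> (k + 1) * length S) \<and>
    (\<exists>S'. spss_norep k (inst S k b) S' \<and> weight S' = (k + 1) * length S)"
proof -
  interpret de_bruijn_instance Sig k S b
    using assms(2-5) by unfold_locales auto
  have "dbg_nodes k (inst S k b) = nodes"
    by (simp add: dbg_nodes_def spec_inst)
  moreover have "{ykmer S k i | i. i < length S} \<union> {zkmer S k b i | i. i < length S} = nodes"
    unfolding nodes_def by blast
  moreover have "\<exists>C. necklaces nodes edges = {C} \<and> closed_necklace edges C \<and>
      (\<exists>str. necklace_string C edges str) \<and>
      (\<forall>str. necklace_string C edges str \<longrightarrow>
         length (filter is_letter str) = 2 * length S \<and>
         length (filter is_paren str) = 2 * length S \<and>
         length str = 4 * length S)"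
    using necklaces_eq closed_necklace_nodes necklace_string_exists necklace_string_length
    by blast
  ultimately show ?thesis
    unfolding dbg_edges_inst edges_def[symmetric]
    using length_S card_nodes necklace_cover_edges N_O_eq N_L_eq
      spss_norep_inst_weight_ge spss_norep_inst_optimal
    by auto
qed

end
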